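(* Let $\Bbbk$ be an algebraically closed field of characteristic $0$, let $P=\Bbbk[x_1,x_2,x_3]$ be a quadratic Poisson algebra, and let $Q=\Bbbk[y_1,y_2,y_3]$ be a Poisson algebra such that: (1) there are distinct $i,j\in\{1,2,3\}$ with $\{y_i,y_j\}=f(y_1,y_2)-r y_3$, where $f\in\Bbbk[y_1,y_2]$ is homogeneous with respect to the grading $\deg y_1=\deg y_2=1$ and $r\in\Bbbk^\times$; (2) for the remaining unordered pairs $\{k,l\}\neq\{i,j\}$ of distinct indices in $\{1,2,3\}$, the bracket $\{y_k,y_l\}$ is a scalar multiple (possibly zero) of a single monomial in $y_1,y_2,y_3$. Then $P$ is not isomorphic to $Q$ as Poisson algebras.
   Context: $P$ has the standard grading and is quadratic: $\{P_1,P_1\}\subseteq P_2$. A Poisson isomorphism is an algebra isomorphism that is also a Lie algebra isomorphism. *)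

theory Defs
  imports "HOL-Library.Poly_Mapping" "HOL-Computational_Algebra.Polynomial"
begin

datatype var3 = V1 | V2 | V3

text \<open>The polynomial ring k[x1,x2,x3]: finitely supported maps from monomials
  (exponent vectors) to coefficients; multiplication is convolution.\<close>
type_synonym 'k mpoly3 = "(var3 \<Rightarrow>\<^sub>0 nat) \<Rightarrow>\<^sub>0 'k"

definition algebraically_closed :: "'k::field itself \<Rightarrow> bool" where
  "algebraically_closed _ \<longleftrightarrow>
     (\<forall>p :: 'k poly. Polynomial.degree p > 0 \<longrightarrow> (\<exists>x. poly p x = 0))"

definition mvar :: "var3 \<Rightarrow> 'k::comm_ring_1 mpoly3" where
  "mvar i = Poly_Mapping.single (Poly_Mapping.single i 1) 1"

definition mconst :: "'k::comm_ring_1 \<Rightarrow> 'k mpoly3" where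
  "mconst c = Poly_Mapping.single 0 c"

definition mmonomial :: "(var3 \<Rightarrow>\<^sub>0 nat) \<Rightarrow> 'k::comm_ring_1 mpoly3" where
  "mmonomial m = Poly_Mapping.single m 1"

definition mdeg :: "(var3 \<Rightarrow>\<^sub>0 nat) \<Rightarrow> nat" where
  "mdeg m = Poly_Mapping.lookup m V1 + Poly_Mapping.lookup m V2 + Poly_Mapping.lookup m V3"

definition homogeneous :: "nat \<Rightarrow> 'k::comm_ring_1 mpoly3 \<Rightarrow> bool" where
  "homogeneous d p \<longleftrightarrow> (\<forall>m \<in> Poly_Mapping.keys p. mdeg m = d)"

definition in_k_y1y2 :: "'k::comm_ring_1 mpoly3 \<Rightarrow> bool" where
  "in_k_y1y2 p \<longleftrightarrow> (\<forall>m \<in> Poly_Mapping.keys p. Poly_Mapping.lookup m V3 = 0)"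

definition poisson_bracket :: "('k::comm_ring_1 mpoly3 \<Rightarrow> 'k mpoly3 \<Rightarrow> 'k mpoly3) \<Rightarrow> bool" where
  "poisson_bracket B \<longleftrightarrow>
     (\<forall>a b c. B (a + b) c = B a c + B b c) \<and>
     (\<forall>a b c. B a (b + c) = B a b + B a c) \<and>
     (\<forall>s a b. B (mconst s * a) b = mconst s * B a b) \<and>
     (\<forall>s a b. B a (mconst s * b) = mconst s * B a b) \<and>
     (\<forall>a b. B a b = - B b a) \<and>
     (\<forall>a b c. B a (B b c) + B b (B c a) + B c (B a b) = 0) \<and>
     (\<forall>a b c. B a (b * c) = B a b * c + b * B a c)"

definition quadratic_poisson :: "('k::comm_ring_1 mpoly3 \<Rightarrow> 'k mpoly3 \<Rightarrow> 'k mpoly3) \<Rightarrow> bool" where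
  "quadratic_poisson B \<longleftrightarrow> (\<forall>i j. homogeneous 2 (B (mvar i) (mvar j)))"

definition poisson_iso ::
  "('k::comm_ring_1 mpoly3 \<Rightarrow> 'k mpoly3 \<Rightarrow> 'k mpoly3) \<Rightarrow> ('k mpoly3 \<Rightarrow> 'k mpoly3 \<Rightarrow> 'k mpoly3)
   \<Rightarrow> ('k mpoly3 \<Rightarrow> 'k mpoly3) \<Rightarrow> bool" where
  "poisson_iso BP BQ \<phi> \<longleftrightarrow>
     bij \<phi> \<and>
     (\<forall>a b. \<phi> (a + b) = \<phi> a + \<phi> b) \<and>
     (\<forall>s a. \<phi> (mconst s * a) = mconst s * \<phi> a) \<and>
     (\<forall>a b. \<phi> (a * b) = \<phi> a * \<phi> b) \<and>
     \<phi> 1 = 1 \<and>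
     (\<forall>a b. \<phi> (BP a b) = BQ (\<phi> a) (\<phi> b))"

end

theory Submission
  imports Defs
begin

text \<open>
  Brackets of a quadratic Poisson structure on P = k[x1,x2,x3] take values in m^2,
  m = (x1,x2,x3). A Poisson isomorphism \<phi> from P to Q therefore puts every bracket of Q
  into n^2 for the maximal ideal n = \<phi>(m) of a point of affine 3-space, so all first
  partial derivatives of a bracket of Q vanish at that point. But d/dy3 of
  {y_i, y_j} = f(y1,y2) - r y3 is the nonzero constant -r.
\<close>

text \<open>\<open>Suc 0\<close> rather than \<open>1\<close>: the simplifier rewrites \<open>1 :: nat\<close> to \<open>Suc 0\<close>, so only
  this form lets lemmas about \<open>unit_exp\<close> serve as rewrite rules.\<close>
abbreviation unit_exp :: "var3 \<Rightarrow> (var3 \<Rightarrow>\<^sub>0 nat)" where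
  "unit_exp v \<equiv> Poly_Mapping.single v (Suc 0)"

lemma plus_unit_exp_neq_0 [simp]: "m + unit_exp v \<noteq> 0"
proof
  assume "m + unit_exp v = 0"
  then have "Poly_Mapping.lookup (m + unit_exp v) v = 0" by simp
  then show False by (simp add: lookup_add)
qed

lemma unit_exp_neq_0 [simp]: "unit_exp v \<noteq> 0"
  using plus_unit_exp_neq_0[of 0 v] by simp

lemma lookup_mconst: "Poly_Mapping.lookup (mconst c) m = (if m = 0 then c else 0)"
  by (simp add: mconst_def lookup_single when_def)

lemma lookup_mconst_mult: "Poly_Mapping.lookup (mconst c * p) m = c * Poly_Mapping.lookup p m"
proof -
  have "mconst c * p = Poly_Mapping.map ((*) c) p"
    by (simp add: mconst_def mult_map_scale_conv_mult)
  then show ?thesis by (simp add: map.rep_eq when_def)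
qed

lemma mconst_1 [simp]: "mconst 1 = 1"
  by (simp add: mconst_def)

lemma update_eq_plus_single:
  "a \<notin> Poly_Mapping.keys f \<Longrightarrow> Poly_Mapping.update a b f = f + Poly_Mapping.single a b"
  by (rule poly_mapping_eqI) (auto simp: lookup_update lookup_add lookup_single when_def in_keys_iff)

lemma mvar_mult_single: "mvar v * Poly_Mapping.single m c = Poly_Mapping.single (unit_exp v + m) c"
  by (simp add: mvar_def mult_single)

lemma lookup_mvar_mult:
  "Poly_Mapping.lookup (mvar v * p) m =
     (if Poly_Mapping.lookup m v > 0 then Poly_Mapping.lookup p (m - unit_exp v) else 0)"
proof (induction p rule: update_induct)
  case const
  then show ?case by simp
next
  case (update p a b)
  have "Poly_Mapping.lookup (mvar v * Poly_Mapping.single a b) m =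
        (if Poly_Mapping.lookup m v > 0 then Poly_Mapping.lookup (Poly_Mapping.single a b) (m - unit_exp v) else 0)"
  proof (cases "Poly_Mapping.lookup m v > 0")
    case True
    then have "unit_exp v + (m - unit_exp v) = m"
      by (intro poly_mapping_eqI) (auto simp: lookup_add lookup_minus lookup_single when_def)
    then show ?thesis using True
      by (auto simp: mvar_mult_single lookup_single when_def)
  next
    case False
    then have "unit_exp v + a \<noteq> m" by (auto simp: lookup_add)
    then show ?thesis using False
      by (auto simp: mvar_mult_single lookup_single when_def)
  qed
  with update show ?case by (simp add: update_eq_plus_single distrib_left lookup_add)
qed

lemma mpoly3_induct [case_names const add mvar_mult]:
  fixes p :: "'k::comm_ring_1 mpoly3"
  assumes const: "\<And>c. P (mconst c)"
    and add: "\<And>a b. P a \<Longrightarrow> P b \<Longrightarrow> P (a + b)"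
    and mvar_mult: "\<And>a v. P a \<Longrightarrow> P (mvar v * a)"
  shows "P p"
proof -
  have monomial: "P (Poly_Mapping.single m c)" for m c
  proof (induction m arbitrary: c rule: update_induct)
    case const
    then show ?case using assms(1) by (simp add: mconst_def)
  next
    case (update m v k)
    have "P (Poly_Mapping.single (m + Poly_Mapping.single v n) c)" for n c
    proof (induction n arbitrary: c)
      case 0
      then show ?case using update by simp
    next
      case (Suc n)
      have "Poly_Mapping.single (m + Poly_Mapping.single v (Suc n)) c
            = mvar v * Poly_Mapping.single (m + Poly_Mapping.single v n) c"
        by (simp add: mvar_mult_single single_add[symmetric] ac_simps)
      then show ?case using Suc mvar_mult by simp
    qed
    with update show ?case by (simp add: update_eq_plus_single)
  qed
  show ?thesis
  proof (induction p rule: update_induct)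
    case const
    then show ?case using assms(1)[of 0] by (simp add: mconst_def)
  next
    case (update p m c)
    then show ?case using add monomial by (simp add: update_eq_plus_single)
  qed
qed

definition const_coeff :: "'k::comm_ring_1 mpoly3 \<Rightarrow> 'k" where
  "const_coeff p = Poly_Mapping.lookup p 0"

lemma const_coeff_add: "const_coeff (a + b) = const_coeff a + const_coeff b"
  by (simp add: const_coeff_def lookup_add)

lemma const_coeff_mconst [simp]: "const_coeff (mconst c) = c"
  by (simp add: const_coeff_def lookup_mconst)

lemma const_coeff_mvar_mult [simp]: "const_coeff (mvar v * p) = 0"
  by (simp add: const_coeff_def lookup_mvar_mult)

lemma const_coeff_mult: "const_coeff (a * b) = const_coeff a * const_coeff b"
proof (induction a rule: mpoly3_induct)
  case (const c)
  then show ?case by (simp add: const_coeff_def lookup_mconst_mult lookup_mconst)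
next
  case (add a a')
  then show ?case by (simp add: distrib_right const_coeff_add)
next
  case (mvar_mult a v)
  then show ?case by (simp add: mult.assoc)
qed

definition mpderiv :: "var3 \<Rightarrow> 'k::comm_ring_1 mpoly3 \<Rightarrow> 'k mpoly3" where
  "mpderiv v p = Abs_poly_mapping (\<lambda>m.
     of_nat (Poly_Mapping.lookup m v + 1) * Poly_Mapping.lookup p (m + unit_exp v))"

lemma lookup_mpderiv:
  "Poly_Mapping.lookup (mpderiv v p) m =
     of_nat (Poly_Mapping.lookup m v + 1) * Poly_Mapping.lookup p (m + unit_exp v)"
proof -
  have "{m. of_nat (Poly_Mapping.lookup m v + 1) * Poly_Mapping.lookup p (m + unit_exp v) \<noteq> 0}
        \<subseteq> (\<lambda>k. k - unit_exp v) ` Poly_Mapping.keys p"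
  proof
    fix k
    assume "k \<in> {m. of_nat (Poly_Mapping.lookup m v + 1) * Poly_Mapping.lookup p (m + unit_exp v) \<noteq> 0}"
    then have "k + unit_exp v \<in> Poly_Mapping.keys p" by (auto simp: in_keys_iff)
    then show "k \<in> (\<lambda>k. k - unit_exp v) ` Poly_Mapping.keys p"
      by (rule rev_image_eqI) simp
  qed
  then have "finite {m. of_nat (Poly_Mapping.lookup m v + 1) *
                        Poly_Mapping.lookup p (m + unit_exp v) \<noteq> 0}"
    by (rule finite_subset) simp
  then show ?thesis by (simp add: mpderiv_def)
qed

lemma mpderiv_add: "mpderiv v (a + b) = mpderiv v a + mpderiv v b"
  by (rule poly_mapping_eqI) (simp add: lookup_mpderiv lookup_add distrib_left)

lemma mpderiv_diff: "mpderiv v (a - b) = mpderiv v a - mpderiv v b"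
  by (rule poly_mapping_eqI) (simp add: lookup_mpderiv lookup_minus right_diff_distrib)

lemma mpderiv_mconst_mult: "mpderiv v (mconst c * p) = mconst c * mpderiv v p"
  by (rule poly_mapping_eqI) (simp add: lookup_mpderiv lookup_mconst_mult mult.left_commute)

lemma mpderiv_mconst [simp]: "mpderiv v (mconst c) = 0"
  by (rule poly_mapping_eqI) (simp add: lookup_mpderiv lookup_mconst)

lemma mpderiv_mvar_mult_other:
  assumes "u \<noteq> v"
  shows "mpderiv v (mvar u * p) = mvar u * mpderiv v p"
proof (rule poly_mapping_eqI)
  fix m :: "var3 \<Rightarrow>\<^sub>0 nat"
  have "m + unit_exp v - unit_exp u = m - unit_exp u + unit_exp v"
    using assms by (intro poly_mapping_eqI) (auto simp: lookup_add lookup_minus lookup_single when_def)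
  with assms show "Poly_Mapping.lookup (mpderiv v (mvar u * p)) m =
        Poly_Mapping.lookup (mvar u * mpderiv v p) m"
    by (simp add: lookup_mpderiv lookup_mvar_mult lookup_add lookup_minus lookup_single)
qed

lemma mpderiv_mvar_mult_self:
  "mpderiv v (mvar v * p) = mvar v * mpderiv v p + p"
proof (rule poly_mapping_eqI)
  fix m :: "var3 \<Rightarrow>\<^sub>0 nat"
  have "m - unit_exp v + unit_exp v = m" if "Poly_Mapping.lookup m v > 0"
    using that by (intro poly_mapping_eqI) (auto simp: lookup_add lookup_minus lookup_single when_def)
  then show "Poly_Mapping.lookup (mpderiv v (mvar v * p)) m =
        Poly_Mapping.lookup (mvar v * mpderiv v p + p) m"
    by (cases "Poly_Mapping.lookup m v")
      (simp_all add: lookup_mpderiv lookup_mvar_mult lookup_add lookup_minus distrib_right)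
qed

lemma mpderiv_mvar_mult:
  "mpderiv v (mvar u * p) = mvar u * mpderiv v p + (if u = v then p else 0)"
  by (simp add: mpderiv_mvar_mult_self mpderiv_mvar_mult_other)

lemma mpderiv_mult: "mpderiv v (a * b) = a * mpderiv v b + b * mpderiv v a"
proof (induction a rule: mpoly3_induct)
  case (const c)
  then show ?case by (simp add: mpderiv_mconst_mult)
next
  case (add a a')
  then show ?case by (simp add: mpderiv_add algebra_simps)
next
  case (mvar_mult a u)
  have "mpderiv v (mvar u * a * b) =
        mvar u * (a * mpderiv v b + b * mpderiv v a) + (if u = v then a * b else 0)"
    by (simp add: mult.assoc mpderiv_mvar_mult mvar_mult.IH)
  then show ?case
    unfolding mpderiv_mvar_mult by (cases "u = v") (simp_all add: algebra_simps)
qed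

lemma mpderiv_mvar_self [simp]: "mpderiv v (mvar v) = (1 :: 'k::comm_ring_1 mpoly3)"
  using mpderiv_mvar_mult[of v v "1 :: 'k mpoly3"] mpderiv_mconst[of v "1 :: 'k"] by simp

lemma mpderiv_eq_0_if_free:
  assumes "\<forall>m \<in> Poly_Mapping.keys p. Poly_Mapping.lookup m v = 0"
  shows "mpderiv v p = 0"
proof (rule poly_mapping_eqI)
  fix m :: "var3 \<Rightarrow>\<^sub>0 nat"
  have "Poly_Mapping.lookup p (m + unit_exp v) = 0"
  proof (rule ccontr)
    assume "Poly_Mapping.lookup p (m + unit_exp v) \<noteq> 0"
    then have "m + unit_exp v \<in> Poly_Mapping.keys p"
      by (simp add: in_keys_iff)
    with assms have "Poly_Mapping.lookup (m + unit_exp v) v = 0" ..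
    then show False
      by (simp add: lookup_add)
  qed
  then show "Poly_Mapping.lookup (mpderiv v p) m = Poly_Mapping.lookup 0 m"
    by (simp add: lookup_mpderiv)
qed

definition mvar_comb :: "(var3 \<Rightarrow> 'k::comm_ring_1 mpoly3) \<Rightarrow> 'k mpoly3" where
  "mvar_comb g = mvar V1 * g V1 + mvar V2 * g V2 + mvar V3 * g V3"

lemma mvar_comb_add: "mvar_comb g + mvar_comb h = mvar_comb (\<lambda>i. g i + h i)"
  by (simp add: mvar_comb_def algebra_simps)

lemma mvar_comb_mult: "q * mvar_comb g = mvar_comb (\<lambda>i. q * g i)"
  by (simp add: mvar_comb_def algebra_simps)

lemma mvar_comb_zero: "mvar_comb (\<lambda>i. 0) = 0"
  by (simp add: mvar_comb_def)

lemma const_coeff_mvar_comb [simp]: "const_coeff (mvar_comb g) = 0"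
  by (simp add: mvar_comb_def const_coeff_add)

lemma lookup_mvar_comb_unit_exp:
  "Poly_Mapping.lookup (mvar_comb g) (unit_exp k) = const_coeff (g k)"
  by (cases k) (simp_all add: mvar_comb_def lookup_add lookup_mvar_mult lookup_single const_coeff_def)

lemma mconst_plus_mvar_comb: "\<exists>c g. p = mconst c + mvar_comb (g :: var3 \<Rightarrow> 'k::comm_ring_1 mpoly3)"
proof (induction p rule: mpoly3_induct)
  case (const c)
  have "mconst c = mconst c + mvar_comb (\<lambda>i. 0)"
    by (simp add: mvar_comb_zero)
  then show ?case by blast
next
  case (add a b)
  then obtain c g c' g' where "a = mconst c + mvar_comb g" "b = mconst c' + mvar_comb g'"
    by blast
  then have "a + b = mconst (c + c') + mvar_comb (\<lambda>i. g i + g' i)"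
    by (simp add: mvar_comb_add[symmetric] mconst_def single_add algebra_simps)
  then show ?case by blast
next
  case (mvar_mult a v)
  then obtain c g where "a = mconst c + mvar_comb g"
    by blast
  then have "mvar v * a = mconst 0 + mvar_comb (\<lambda>i. mvar v * g i + (if i = v then mconst c else 0))"
    by (cases v) (simp_all add: mvar_comb_def mconst_def algebra_simps)
  then show ?case by blast
qed

definition in_origin_ideal_sq :: "'k::comm_ring_1 mpoly3 \<Rightarrow> bool" where
  "in_origin_ideal_sq w \<longleftrightarrow> (\<exists>h. w = mvar_comb (\<lambda>i. mvar_comb (h i)))"

lemma in_origin_ideal_sq_0: "in_origin_ideal_sq 0"
  unfolding in_origin_ideal_sq_def by (rule exI[of _ "\<lambda>i j. 0"]) (simp add: mvar_comb_zero)

lemma in_origin_ideal_sq_add: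
  "in_origin_ideal_sq a \<Longrightarrow> in_origin_ideal_sq b \<Longrightarrow> in_origin_ideal_sq (a + b)"
  unfolding in_origin_ideal_sq_def by (auto simp: mvar_comb_add)

lemma in_origin_ideal_sq_mult_left: "in_origin_ideal_sq a \<Longrightarrow> in_origin_ideal_sq (q * a)"
  unfolding in_origin_ideal_sq_def by (auto simp: mvar_comb_mult)

lemma in_origin_ideal_sq_mult_right: "in_origin_ideal_sq a \<Longrightarrow> in_origin_ideal_sq (a * q)"
  using in_origin_ideal_sq_mult_left[of a q] by (simp add: mult.commute)

lemma mdeg_unit_exp: "mdeg (unit_exp k) = 1"
  by (cases k) (simp_all add: mdeg_def lookup_single)

lemma homogeneous_2_imp_in_origin_ideal_sq:
  assumes "homogeneous 2 (w :: 'k::comm_ring_1 mpoly3)"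
  shows "in_origin_ideal_sq w"
proof -
  obtain c g where w: "w = mconst c + mvar_comb g"
    using mconst_plus_mvar_comb by blast
  have "\<forall>i. \<exists>c h. g i = mconst c + mvar_comb (h :: var3 \<Rightarrow> 'k mpoly3)"
    using mconst_plus_mvar_comb by blast
  then obtain c' h where g: "\<And>i. g i = mconst (c' i) + mvar_comb (h i)"
    by metis
  have "0 \<notin> Poly_Mapping.keys w"
    using assms by (auto simp: homogeneous_def mdeg_def)
  then have "c = 0"
    by (simp add: w in_keys_iff const_coeff_add flip: const_coeff_def)
  have "c' i = 0" for i
  proof -
    have "unit_exp i \<notin> Poly_Mapping.keys w"
      using assms mdeg_unit_exp[of i] by (auto simp: homogeneous_def)
    then show ?thesis
      by (simp add: w g in_keys_iff lookup_add lookup_mconst lookup_mvar_comb_unit_exp const_coeff_add)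
  qed
  then have "g = (\<lambda>i. mvar_comb (h i))"
    by (simp add: fun_eq_iff g mconst_def)
  with \<open>c = 0\<close> have "w = mvar_comb (\<lambda>i. mvar_comb (h i))"
    by (simp add: w mconst_def)
  then show ?thesis
    unfolding in_origin_ideal_sq_def by blast
qed

lemma poisson_bracket_mconst_right:
  assumes "poisson_bracket B"
  shows "B a (mconst c) = 0"
proof -
  have "B a (mconst c * 1) = mconst c * B a 1" and "B a (1 * 1) = B a 1 * 1 + 1 * B a 1"
    using assms unfolding poisson_bracket_def by blast+
  then show ?thesis by simp
qed

lemma poisson_bracket_mconst_left:
  assumes "poisson_bracket B"
  shows "B (mconst c) a = 0"
  using assms poisson_bracket_mconst_right[OF assms] unfolding poisson_bracket_def
  by (metis neg_equal_0_iff_equal)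

lemma poisson_bracket_mult_left:
  assumes "poisson_bracket B"
  shows "B (a * c) b = B a b * c + a * B c b"
proof -
  have antisym: "\<And>a b. B a b = - B b a" and leibniz: "\<And>a b c. B a (b * c) = B a b * c + b * B a c"
    using assms unfolding poisson_bracket_def by blast+
  show ?thesis
    using antisym[of "a * c" b] antisym[of b a] antisym[of b c] by (simp add: leibniz)
qed

lemma poisson_bracket_in_origin_ideal_sq:
  assumes "poisson_bracket B" and "quadratic_poisson B"
  shows "in_origin_ideal_sq (B a b)"
proof -
  have add_left: "\<And>a b c. B (a + b) c = B a c + B b c"
    and add_right: "\<And>a b c. B a (b + c) = B a b + B a c"
    and leibniz: "\<And>a b c. B a (b * c) = B a b * c + b * B a c"
    using assms(1) unfolding poisson_bracket_def by blast+
  have mvar_left: "in_origin_ideal_sq (B (mvar u) y)" for u y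
  proof (induction y rule: mpoly3_induct)
    case (const c)
    then show ?case by (simp add: poisson_bracket_mconst_right[OF assms(1)] in_origin_ideal_sq_0)
  next
    case (add y y')
    then show ?case by (simp add: add_right in_origin_ideal_sq_add)
  next
    case (mvar_mult y v)
    have "in_origin_ideal_sq (B (mvar u) (mvar v))"
      using assms(2) homogeneous_2_imp_in_origin_ideal_sq unfolding quadratic_poisson_def by blast
    with mvar_mult show ?case
      by (simp add: leibniz in_origin_ideal_sq_add in_origin_ideal_sq_mult_left in_origin_ideal_sq_mult_right)
  qed
  show ?thesis
  proof (induction a arbitrary: b rule: mpoly3_induct)
    case (const c)
    then show ?case by (simp add: poisson_bracket_mconst_left[OF assms(1)] in_origin_ideal_sq_0)
  next
    case (add a a')
    then show ?case by (simp add: add_left in_origin_ideal_sq_add)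
  next
    case (mvar_mult a u)
    with mvar_left show ?case
      by (simp add: poisson_bracket_mult_left[OF assms(1)] in_origin_ideal_sq_add
          in_origin_ideal_sq_mult_left in_origin_ideal_sq_mult_right)
  qed
qed

lemma pderiv_at_image_of_origin_vanishes:
  fixes \<phi> :: "'k::comm_ring_1 mpoly3 \<Rightarrow> 'k mpoly3"
  assumes "bij \<phi>"
    and add: "\<And>a b. \<phi> (a + b) = \<phi> a + \<phi> b"
    and mult: "\<And>a b. \<phi> (a * b) = \<phi> a * \<phi> b"
    and "in_origin_ideal_sq w"
  shows "const_coeff (inv \<phi> (mpderiv v (\<phi> w))) = 0"
proof -
  txt \<open>\<open>\<chi>\<close> is evaluation at the point whose maximal ideal is the \<open>\<phi>\<close>-image of the
    origin's; composed with \<open>mpderiv v\<close> it is a derivation at that point, which kills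
    products of two functions vanishing there.\<close>
  define \<chi> where "\<chi> u = const_coeff (inv \<phi> u)" for u
  have inv_apply: "inv \<phi> (\<phi> a) = a" and apply_inv: "\<phi> (inv \<phi> u) = u" for a u
    using \<open>bij \<phi>\<close> by (simp_all add: bij_is_inj bij_is_surj surj_f_inv_f)
  have \<chi>_add: "\<chi> (u + u') = \<chi> u + \<chi> u'" for u u'
    by (metis \<chi>_def add apply_inv inv_apply const_coeff_add)
  have \<chi>_mult: "\<chi> (u * u') = \<chi> u * \<chi> u'" for u u'
    by (metis \<chi>_def mult apply_inv inv_apply const_coeff_mult)
  have \<chi>_mvar_mult: "\<chi> (\<phi> (mvar i * a)) = 0" for i a
    by (simp add: \<chi>_def inv_apply)
  have \<chi>_deriv_mult: "\<chi> (mpderiv v (u * u')) = \<chi> u * \<chi> (mpderiv v u') + \<chi> u' * \<chi> (mpderiv v u)"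
    for u u'
    by (simp add: mpderiv_mult \<chi>_add \<chi>_mult)
  have quadratic_term: "\<chi> (mpderiv v (\<phi> (mvar i * (mvar j * a)))) = 0" for i j a
    using \<chi>_deriv_mult[of "\<phi> (mvar i)" "\<phi> (mvar j * a)"] \<chi>_mvar_mult[of i 1] \<chi>_mvar_mult[of j a]
    by (simp add: mult)
  obtain h where "w = mvar_comb (\<lambda>i. mvar_comb (h i))"
    using \<open>in_origin_ideal_sq w\<close> unfolding in_origin_ideal_sq_def by blast
  then show ?thesis
    by (simp add: mvar_comb_def distrib_left add mpderiv_add \<chi>_add quadratic_term flip: \<chi>_def)
qed

lemma poisson_iso_const_coeff_pderiv_bracket:
  assumes "poisson_bracket BP" and "quadratic_poisson BP" and "poisson_iso BP BQ \<phi>"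
  shows "const_coeff (inv \<phi> (mpderiv v (BQ a b))) = 0"
proof -
  have "bij \<phi>" and add: "\<And>a b. \<phi> (a + b) = \<phi> a + \<phi> b"
    and mult: "\<And>a b. \<phi> (a * b) = \<phi> a * \<phi> b"
    and bracket: "\<And>a b. \<phi> (BP a b) = BQ (\<phi> a) (\<phi> b)"
    using assms(3) unfolding poisson_iso_def by blast+
  then have "BQ a b = \<phi> (BP (inv \<phi> a) (inv \<phi> b))"
    by (simp add: bij_is_surj surj_f_inv_f)
  then show ?thesis
    using pderiv_at_image_of_origin_vanishes[OF \<open>bij \<phi>\<close> add mult]
      poisson_bracket_in_origin_ideal_sq[OF assms(1,2)]
    by simp
qed

lemma poisson_iso_inv_mconst:
  assumes "poisson_iso BP BQ \<phi>"
  shows "inv \<phi> (mconst c) = mconst c"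
proof -
  have "bij \<phi>" and "\<phi> (mconst c * 1) = mconst c * \<phi> 1" and "\<phi> 1 = 1"
    using assms unfolding poisson_iso_def by blast+
  then have "inj \<phi>" and "\<phi> (mconst c) = mconst c"
    by (simp_all add: bij_is_inj)
  then show ?thesis
    by (metis inv_f_f)
qed

theorem lemma2p2:
  fixes BP BQ :: "'k::field_char_0 mpoly3 \<Rightarrow> 'k mpoly3 \<Rightarrow> 'k mpoly3"
  assumes "algebraically_closed TYPE('k)"
    and "poisson_bracket BP" and "quadratic_poisson BP"
    and "poisson_bracket BQ"
    and "\<exists>i j f d r. i \<noteq> j \<and> in_k_y1y2 f \<and> homogeneous d f \<and> r \<noteq> 0 \<and>
           BQ (mvar i) (mvar j) = f - mconst r * mvar V3 \<and>
           (\<forall>k l. k \<noteq> l \<and> {k, l} \<noteq> {i, j} \<longrightarrow>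
              (\<exists>c m. BQ (mvar k) (mvar l) = mconst c * mmonomial m))"
  shows "\<not> (\<exists>\<phi>. poisson_iso BP BQ \<phi>)"
proof
  assume "\<exists>\<phi>. poisson_iso BP BQ \<phi>"
  then obtain \<phi> where iso: "poisson_iso BP BQ \<phi>" ..
  obtain i j f r where "r \<noteq> 0" and "in_k_y1y2 f"
    and bracket: "BQ (mvar i) (mvar j) = f - mconst r * mvar V3"
    using assms(5) by blast
  have "mpderiv V3 f = 0"
    using \<open>in_k_y1y2 f\<close> unfolding in_k_y1y2_def by (rule mpderiv_eq_0_if_free)
  then have "mpderiv V3 (BQ (mvar i) (mvar j)) = mconst (- r)"
    by (simp add: bracket mpderiv_diff mpderiv_mconst_mult) (simp add: mconst_def single_uminus)
  moreover have "inv \<phi> (mconst (- r)) = mconst (- r)"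
    using iso by (rule poisson_iso_inv_mconst)
  ultimately have "- r = 0"
    using poisson_iso_const_coeff_pderiv_bracket[OF assms(2,3) iso, of V3 "mvar i" "mvar j"]
    by simp
  with \<open>r \<noteq> 0\<close> show False by simp
qed

end
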